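(* For $\delta\in\mathcal{D}^{LSL}$ the following two conditions are equivalent: (1) $\delta\ast\delta=\delta$; (2) there exists some $a\in[0,1]$ such that $\delta=u_a$, where $u_a(x)=x^2/a$ for $x\le a$ and $u_a(x)=x$ for $x>a$.
   Context: $\lambda$ is Lebesgue measure on $[0,1]$. Let $\mathcal{D}$ be the set of all functions $\delta:[0,1]\to[0,1]$ with $\delta(u)\le u$ for all $u$, $\delta(1)=1$, $\delta$ non-decreasing, and $|\delta(v)-\delta(u)|\le 2|v-u|$. Let $\mathcal{D}^{LSL}$ be the set of $\delta\in\mathcal{D}$ such that $x\mapsto\delta(x)/x$ is non-decreasing on $(0,1]$ and $x\mapsto\delta(x)/x^2$ is non-increasing on $(0,1]$. For $\delta_1,\delta_2\in\mathcal{D}^{LSL}$ the star product is $(\delta_1\ast\delta_2)(0):=0$ and $(\delta_1\ast\delta_2)(x):=\frac1x\delta_1(x)\delta_2(x)+x^2\int_{[x,1]}(\delta_1(u)/u)'(\delta_2(u)/u)'\,d\lambda(u)$ for $x\in(0,1]$. In the definition of $u_a$ the convention $0/0:=0$ is used (so $u_0(x)=x$ for all $x$). *)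

theory Defs
  imports "HOL-Analysis.Analysis"
begin

text \<open>The class D: functions on [0,1] (values outside [0,1] are irrelevant).\<close>
definition copD :: "(real \<Rightarrow> real) \<Rightarrow> bool" where
  "copD \<delta> \<longleftrightarrow>
     (\<forall>u\<in>{0..1}. \<delta> u \<in> {0..1}) \<and>
     (\<forall>u\<in>{0..1}. \<delta> u \<le> u) \<and>
     \<delta> 1 = 1 \<and>
     mono_on {0..1} \<delta> \<and>
     (\<forall>u\<in>{0..1}. \<forall>v\<in>{0..1}. \<bar>\<delta> v - \<delta> u\<bar> \<le> 2 * \<bar>v - u\<bar>)"

definition copD_LSL :: "(real \<Rightarrow> real) \<Rightarrow> bool" where
  "copD_LSL \<delta> \<longleftrightarrow> copD \<delta> \<and>
     (\<forall>x y. 0 < x \<and> x \<le> y \<and> y \<le> 1 \<longrightarrow> \<delta> x / x \<le> \<delta> y / y) \<and>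
     (\<forall>x y. 0 < x \<and> x \<le> y \<and> y \<le> 1 \<longrightarrow> \<delta> y / y\<^sup>2 \<le> \<delta> x / x\<^sup>2)"

text \<open>Star product; the derivative (delta(u)/u)' is the (a.e. existing) derivative,
  rendered via deriv; integration is w.r.t. Lebesgue measure on [x,1].\<close>
definition star :: "(real \<Rightarrow> real) \<Rightarrow> (real \<Rightarrow> real) \<Rightarrow> real \<Rightarrow> real" where
  "star \<delta>1 \<delta>2 x = (if x = 0 then 0 else
     (1 / x) * \<delta>1 x * \<delta>2 x +
     x\<^sup>2 * (LINT u:{x..1}|lebesgue.
        deriv (\<lambda>t. \<delta>1 t / t) u * deriv (\<lambda>t. \<delta>2 t / t) u))"

text \<open>u_a(x) = x^2/a for x \<le> a, x otherwise (with 0/0 = 0, so u_0(x) = x on [0,1]).\<close>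
definition ua :: "real \<Rightarrow> real \<Rightarrow> real" where
  "ua a x = (if x \<le> a then x\<^sup>2 / a else x)"

end

theory Submission
  imports Defs
begin

(* Write g(t) = delta(t)/t. Then (delta * delta)(x) = x g(x)^2 + x^2 (integral over [x,1] of g'^2),
   so delta is idempotent iff g(x) (1 - g(x)) / x equals the integral of g'^2 over [x,1] for
   0 < x <= 1. The LSL conditions say that g is non-decreasing with t <= g(t) <= 1 = g(1), and that
   g(t)/t is non-increasing. If g is not identically 1, let a be the least point with g = 1 on [a,1].
   On [x,a] with 0 < x < a one has the identity
     g'^2 + (g (1 - g) / t)' = (t g' - g) (t g' + 1 - g) / t^2,
   whose right-hand side is <= 0 by the two monotonicity conditions; integrating over [x,a] gives 0,
   so t g' = g almost everywhere. Hence (g/t)' = 0 almost everywhere, g(t)/t = g(a)/a = 1/a on (0,a],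
   and delta = u_a. The converse is a direct computation. The analytic input is Lebesgue's theorem
   that monotone Lipschitz functions are differentiable almost everywhere (via the Vitali covering
   theorem) and the fundamental theorem of calculus for Lipschitz functions. *)

section \<open>Lebesgue's differentiation theorem for monotone Lipschitz functions\<close>

lemma negligible_diff_UN_greaterThanLessThan:
  fixes C :: "(real \<times> real) set"
  assumes "countable C" and "negligible (S - (\<Union>(a, b)\<in>C. {a..b}))"
  shows "negligible (S - (\<Union>(a, b)\<in>C. {a<..<b}))"
proof -
  have "S - (\<Union>(a, b)\<in>C. {a<..<b}) \<subseteq> (S - (\<Union>(a, b)\<in>C. {a..b})) \<union> (fst ` C \<union> snd ` C)"
  proof
    fix x assume x: "x \<in> S - (\<Union>(a, b)\<in>C. {a<..<b})"
    show "x \<in> (S - (\<Union>(a, b)\<in>C. {a..b})) \<union> (fst ` C \<union> snd ` C)"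
    proof (cases "\<exists>(a, b)\<in>C. x \<in> {a..b}")
      case True
      then obtain a b where ab: "(a, b) \<in> C" "a \<le> x" "x \<le> b"
        by auto
      moreover have "\<not> (a < x \<and> x < b)"
        using x ab(1) by auto
      ultimately have "x = fst (a, b) \<or> x = snd (a, b)"
        by auto
      then show ?thesis
        using ab(1) by (metis UnI2 Un_iff image_eqI)
    qed (use x in auto)
  qed
  moreover have "negligible (fst ` C \<union> snd ` C)"
    using assms(1) countable_imp_null_set_lborel negligible_iff_null_sets null_sets_completionI
    by (metis countable_Un countable_image)
  ultimately show ?thesis
    using assms(2) negligible_Un negligible_subset by metis
qed

lemma vitali_interval_cover:
  fixes E G :: "real set" and P :: "real \<Rightarrow> real \<Rightarrow> bool"
  assumes G: "open G"
    and fine: "\<And>x d. x \<in> E \<Longrightarrow> 0 < d \<Longrightarrow> \<exists>a b. a < b \<and> b - a < d \<and> x \<in> {a..b} \<and> P a b"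
  obtains C where "countable C" "\<And>a b. (a, b) \<in> C \<Longrightarrow> a < b \<and> {a..b} \<subseteq> G \<and> P a b"
    "disjoint_family_on (\<lambda>(a, b). {a..b}) C"
    "negligible (E \<inter> G - (\<Union>(a, b)\<in>C. {a<..<b}))"
proof -
  define K where "K = {(a, b). a < b \<and> {a..b} \<subseteq> G \<and> P a b}"
  define c :: "real \<times> real \<Rightarrow> real" where "c = (\<lambda>(a, b). (a + b) / 2)"
  define r :: "real \<times> real \<Rightarrow> real" where "r = (\<lambda>(a, b). (b - a) / 2)"
  have cball_eq: "cball (c p) (r p) = (case p of (a, b) \<Rightarrow> {a..b})" for p
    by (cases p) (simp add: c_def r_def cball_eq_atLeastAtMost field_simps)
  have r_pos: "0 < r p" if "p \<in> K" for p
    using that by (auto simp: K_def r_def)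
  have cover: "\<exists>p. p \<in> K \<and> x \<in> cball (c p) (r p) \<and> r p < d" if x: "x \<in> E \<inter> G" and "0 < d" for x d
  proof -
    obtain e where e: "0 < e" "ball x e \<subseteq> G"
      using G x openE by blast
    obtain a b where ab: "a < b" "b - a < min d e" "x \<in> {a..b}" "P a b"
      using fine[of x "min d e"] x \<open>0 < d\<close> e by auto
    have "{a..b} \<subseteq> ball x e"
      using ab by (auto simp: dist_real_def)
    then have "(a, b) \<in> K"
      using ab e by (auto simp: K_def)
    moreover have "x \<in> cball (c (a, b)) (r (a, b))"
      using ab(3) by (simp only: cball_eq prod.case)
    ultimately show ?thesis
      using ab by (intro exI[of _ "(a, b)"]) (auto simp: r_def)
  qed
  obtain C where C: "countable C" "C \<subseteq> K"
      "pairwise (\<lambda>p q. disjnt (cball (c p) (r p)) (cball (c q) (r q))) C"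
      "negligible (E \<inter> G - (\<Union>p\<in>C. cball (c p) (r p)))"
    using Vitali_covering_theorem_cballs[of K r "E \<inter> G" c, OF r_pos cover] by blast
  have "negligible (E \<inter> G - (\<Union>(a, b)\<in>C. {a<..<b}))"
    using C(1,4) by (intro negligible_diff_UN_greaterThanLessThan) (simp_all only: cball_eq)
  moreover have "disjoint_family_on (\<lambda>(a, b). {a..b}) C"
    using C(3) unfolding disjoint_family_on_def pairwise_def disjnt_def by (simp add: cball_eq)
  ultimately show ?thesis
    using that C(1,2) by (auto simp: K_def)
qed

lemma emeasure_disjoint_UN_Icc_le:
  fixes C :: "(real \<times> real) set" and c :: ennreal
  assumes M: "sets M = sets borel" and M': "sets M' = sets borel"
    and C: "countable C" "disjoint_family_on (\<lambda>(a, b). {a..b}) C"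
    and le: "\<And>a b. (a, b) \<in> C \<Longrightarrow> emeasure M {a..b} \<le> c * emeasure M' {a..b}"
  shows "emeasure M (\<Union>(a, b)\<in>C. {a..b}) \<le> c * emeasure M' (\<Union>(a, b)\<in>C. {a..b})"
proof -
  have UN: "emeasure N (\<Union>(a, b)\<in>C. {a..b}) = (\<integral>\<^sup>+p. emeasure N {fst p..snd p} \<partial>count_space C)"
    if "sets N = sets borel" for N :: "real measure"
  proof -
    have "(\<lambda>(a, b). {a..b}) = (\<lambda>p. {fst p..snd p :: real})"
      by auto
    then show ?thesis
      using emeasure_UN_countable[of C "\<lambda>p. {fst p..snd p}" N] C that by auto
  qed
  have "(\<integral>\<^sup>+p. emeasure M {fst p..snd p} \<partial>count_space C)
      \<le> (\<integral>\<^sup>+p. c * emeasure M' {fst p..snd p} \<partial>count_space C)"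
    using le by (intro nn_integral_mono) auto
  also have "\<dots> = c * (\<integral>\<^sup>+p. emeasure M' {fst p..snd p} \<partial>count_space C)"
    by (rule nn_integral_cmult) auto
  finally show ?thesis
    using UN[OF M] UN[OF M'] by simp
qed

lemma interval_measure_Icc:
  fixes F :: "real \<Rightarrow> real"
  assumes "mono F" "continuous_on UNIV F" "a \<le> b"
  shows "emeasure (interval_measure F) {a..b} = ennreal (F b - F a)"
  using assms by (intro emeasure_interval_measure_Icc) (auto simp: mono_def)

lemma vitali_cover_slope_le:
  fixes F :: "real \<Rightarrow> real"
  assumes mono: "mono F" and cont: "continuous_on UNIV F" and "0 \<le> c" and G: "open G"
    and fine: "\<And>x d. x \<in> E \<Longrightarrow> 0 < d \<Longrightarrow> \<exists>a b. a < b \<and> b - a < d \<and> x \<in> {a..b} \<and> F b - F a < c * (b - a)"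
  obtains W where "open W" "W \<subseteq> G" "negligible (E \<inter> G - W)"
    "emeasure (interval_measure F) W \<le> ennreal c * emeasure lborel G"
proof -
  obtain C where C: "countable C"
      "\<And>a b. (a, b) \<in> C \<Longrightarrow> a < b \<and> {a..b} \<subseteq> G \<and> F b - F a < c * (b - a)"
      "disjoint_family_on (\<lambda>(a, b). {a..b}) C" "negligible (E \<inter> G - (\<Union>(a, b)\<in>C. {a<..<b}))"
    using vitali_interval_cover[OF G fine] by blast
  define U where "U = (\<Union>(a, b)\<in>C. {a..b})"
  define W where "W = (\<Union>(a, b)\<in>C. {a<..<b})"
  have U: "U \<in> sets borel" "U \<subseteq> G"
    unfolding U_def using C(1,2) by (auto intro: sets.countable_UN'')
  have W: "open W" "W \<subseteq> U"
    unfolding U_def W_def by (auto intro!: UN_mono split: prod.splits)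
  have "emeasure (interval_measure F) W \<le> emeasure (interval_measure F) U"
    using U W by (intro emeasure_mono) auto
  also have "\<dots> \<le> ennreal c * emeasure lborel U"
    unfolding U_def
  proof (rule emeasure_disjoint_UN_Icc_le[OF _ _ C(1,3)])
    fix a b assume "(a, b) \<in> C"
    with C(2) have ab: "a < b" "F b - F a < c * (b - a)"
      by auto
    then have "ennreal (F b - F a) \<le> ennreal c * ennreal (b - a)"
      using \<open>0 \<le> c\<close> by (simp add: ennreal_mult[symmetric] ennreal_leI)
    then show "emeasure (interval_measure F) {a..b} \<le> ennreal c * emeasure lborel {a..b}"
      using ab mono cont by (simp add: interval_measure_Icc)
  qed simp_all
  also have "\<dots> \<le> ennreal c * emeasure lborel G"
    using U G by (intro mult_left_mono emeasure_mono) auto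
  finally have "emeasure (interval_measure F) W \<le> ennreal c * emeasure lborel G" .
  then show ?thesis
    using that W U(2) C(4) unfolding W_def by blast
qed

lemma vitali_cover_slope_ge:
  fixes F :: "real \<Rightarrow> real"
  assumes mono: "mono F" and cont: "continuous_on UNIV F" and "0 < c" and G: "open G"
    and fine: "\<And>x d. x \<in> E \<Longrightarrow> 0 < d \<Longrightarrow> \<exists>a b. a < b \<and> b - a < d \<and> x \<in> {a..b} \<and> c * (b - a) < F b - F a"
  obtains W where "open W" "W \<subseteq> G" "negligible (E \<inter> G - W)"
    "ennreal c * emeasure lborel W \<le> emeasure (interval_measure F) G"
proof -
  obtain C where C: "countable C"
      "\<And>a b. (a, b) \<in> C \<Longrightarrow> a < b \<and> {a..b} \<subseteq> G \<and> c * (b - a) < F b - F a"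
      "disjoint_family_on (\<lambda>(a, b). {a..b}) C" "negligible (E \<inter> G - (\<Union>(a, b)\<in>C. {a<..<b}))"
    using vitali_interval_cover[OF G fine] by blast
  define U where "U = (\<Union>(a, b)\<in>C. {a..b})"
  define W where "W = (\<Union>(a, b)\<in>C. {a<..<b})"
  have U: "U \<in> sets borel" "U \<subseteq> G"
    unfolding U_def using C(1,2) by (auto intro: sets.countable_UN'')
  have W: "open W" "W \<subseteq> U"
    unfolding U_def W_def by (auto intro!: UN_mono split: prod.splits)
  have "ennreal c * emeasure lborel W \<le> ennreal c * emeasure lborel U"
    using U W by (intro mult_left_mono emeasure_mono) auto
  also have "\<dots> \<le> ennreal c * (ennreal (1 / c) * emeasure (interval_measure F) U)"
    unfolding U_def
  proof (intro mult_left_mono emeasure_disjoint_UN_Icc_le[OF _ _ C(1,3)])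
    fix a b assume "(a, b) \<in> C"
    with C(2) have ab: "a < b" "c * (b - a) < F b - F a"
      by auto
    then have "0 \<le> F b - F a"
      using \<open>0 < c\<close> mult_pos_pos[of c "b - a"] by linarith
    have "ennreal (b - a) \<le> ennreal (1 / c * (F b - F a))"
      using \<open>0 < c\<close> ab by (intro ennreal_leI) (simp add: field_simps)
    also have "\<dots> = ennreal (1 / c) * ennreal (F b - F a)"
      using \<open>0 < c\<close> \<open>0 \<le> F b - F a\<close> by (intro ennreal_mult) auto
    finally show "emeasure lborel {a..b} \<le> ennreal (1 / c) * emeasure (interval_measure F) {a..b}"
      using ab mono cont by (simp add: interval_measure_Icc)
  qed simp_all
  also have "\<dots> = emeasure (interval_measure F) U"
    using \<open>0 < c\<close> by (simp add: mult.assoc[symmetric] ennreal_mult[symmetric])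
  also have "\<dots> \<le> emeasure (interval_measure F) G"
    using U G by (intro emeasure_mono) auto
  finally have "ennreal c * emeasure lborel W \<le> emeasure (interval_measure F) G" .
  then show ?thesis
    using that W U(2) C(4) unfolding W_def by blast
qed

definition dini_crossing :: "(real \<Rightarrow> real) \<Rightarrow> real \<Rightarrow> real \<Rightarrow> real set" where
  "dini_crossing F u v = {x.
     (\<exists>\<^sub>F k in at_right 0. u < (F (x + k) - F x) / k) \<and>
     (\<exists>\<^sub>F k in at_left 0. (F (x + k) - F x) / k < v)}"

lemma frequently_at_right_0_iff:
  "(\<exists>\<^sub>F k in at_right (0::real). P k) \<longleftrightarrow> (\<forall>d>0. \<exists>k. 0 < k \<and> k < d \<and> P k)"
  by (auto simp: frequently_at dist_real_def)

lemma frequently_at_left_0_iff: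
  "(\<exists>\<^sub>F k in at_left (0::real). P k) \<longleftrightarrow> (\<forall>d>0. \<exists>k. 0 < k \<and> k < d \<and> P (- k))"
  by (simp add: at_left_minus frequently_filtermap frequently_at_right_0_iff)

text \<open>Cover by intervals of slope \<open>< v\<close> inside \<open>G\<close>, then by intervals of slope \<open>> u\<close> inside
  those; the Lebesgue-Stieltjes measure of \<open>F\<close> is at most \<open>v |G|\<close> on the first cover and at
  least \<open>u |G'|\<close> on the second.\<close>

lemma dini_crossing_contract:
  fixes F :: "real \<Rightarrow> real"
  assumes mono: "mono F" and cont: "continuous_on UNIV F" and uv: "0 < v" "v < u"
    and G: "open G"
  obtains G' N where "open G'" "negligible N" "dini_crossing F u v \<inter> G \<subseteq> G' \<union> N"
    "emeasure lborel G' \<le> ennreal (v / u) * emeasure lborel G"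
proof -
  define E where "E = dini_crossing F u v"
  have fine_left: "\<exists>a b. a < b \<and> b - a < d \<and> x \<in> {a..b} \<and> F b - F a < v * (b - a)"
    if "x \<in> E" "0 < d" for x d
  proof -
    have "\<exists>\<^sub>F k in at_left 0. (F (x + k) - F x) / k < v"
      using that by (simp add: E_def dini_crossing_def)
    then obtain k where "0 < k" "k < d" "(F (x + - k) - F x) / - k < v"
      using \<open>0 < d\<close> unfolding frequently_at_left_0_iff by blast
    then show ?thesis
      by (intro exI[of _ "x - k"] exI[of _ x]) (auto simp: field_simps)
  qed
  obtain W where W: "open W" "W \<subseteq> G" "negligible (E \<inter> G - W)"
      "emeasure (interval_measure F) W \<le> ennreal v * emeasure lborel G"
    using vitali_cover_slope_le[OF mono cont less_imp_le[OF uv(1)] G fine_left] by blast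
  have fine_right: "\<exists>a b. a < b \<and> b - a < d \<and> x \<in> {a..b} \<and> u * (b - a) < F b - F a"
    if "x \<in> E" "0 < d" for x d
  proof -
    have "\<exists>\<^sub>F k in at_right 0. u < (F (x + k) - F x) / k"
      using that by (simp add: E_def dini_crossing_def)
    then obtain k where "0 < k" "k < d" "u < (F (x + k) - F x) / k"
      using \<open>0 < d\<close> unfolding frequently_at_right_0_iff by blast
    then show ?thesis
      by (intro exI[of _ x] exI[of _ "x + k"]) (auto simp: field_simps)
  qed
  obtain G' where G': "open G'" "negligible (E \<inter> W - G')"
      "ennreal u * emeasure lborel G' \<le> emeasure (interval_measure F) W"
    using vitali_cover_slope_ge[OF mono cont less_trans[OF uv] W(1) fine_right] by blast
  have "emeasure lborel G' = ennreal (1 / u) * (ennreal u * emeasure lborel G')"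
    using uv by (simp add: mult.assoc[symmetric] ennreal_mult[symmetric])
  also have "\<dots> \<le> ennreal (1 / u) * (ennreal v * emeasure lborel G)"
    using order_trans[OF G'(3) W(4)] by (rule mult_left_mono) simp
  also have "\<dots> = ennreal (v / u) * emeasure lborel G"
    using uv by (simp add: mult.assoc[symmetric] ennreal_mult[symmetric])
  finally have "emeasure lborel G' \<le> ennreal (v / u) * emeasure lborel G" .
  moreover have "E \<inter> G \<subseteq> G' \<union> ((E \<inter> G - W) \<union> (E \<inter> W - G'))"
    by blast
  moreover have "negligible ((E \<inter> G - W) \<union> (E \<inter> W - G'))"
    using G'(2) W(3) by simp
  ultimately show ?thesis
    using that[of G' "(E \<inter> G - W) \<union> (E \<inter> W - G')"] G'(1) unfolding E_def by blast
qed

lemma negligible_if_small_open_covers: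
  fixes S :: "real set"
  assumes "\<And>e. 0 < e \<Longrightarrow> \<exists>G N. open G \<and> negligible N \<and> S \<subseteq> G \<union> N \<and> emeasure lborel G \<le> ennreal e"
  shows "negligible S"
  unfolding negligible_outer_le
proof (intro allI impI)
  fix e :: real assume "0 < e"
  then obtain G N where GN: "open G" "negligible N" "S \<subseteq> G \<union> N" "emeasure lborel G \<le> ennreal e"
    using assms by blast
  have G_sets: "G \<in> sets borel"
    using GN(1) by simp
  then have G_le: "emeasure lebesgue G \<le> ennreal e"
    using GN(4) by simp
  then have G_fin: "G \<in> lmeasurable"
    using G_sets by (intro fmeasurableI) (auto simp: le_less_trans)
  then have "measure lebesgue G \<le> e"
    using G_le \<open>0 < e\<close> by (simp add: emeasure_eq_measure2 ennreal_le_iff)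
  moreover have N: "N \<in> lmeasurable" "measure lebesgue N = 0"
    using GN(2) by (auto simp: negligible_imp_measurable negligible_imp_measure0)
  ultimately have "measure lebesgue (G \<union> N) \<le> e"
    using G_fin measure_Un_le[of G lebesgue N] by simp
  then show "\<exists>T. S \<subseteq> T \<and> T \<in> lmeasurable \<and> measure lebesgue T \<le> e"
    using GN(3) G_fin N(1) by (intro exI[of _ "G \<union> N"]) auto
qed

lemma dini_crossing_iterated_cover:
  fixes F :: "real \<Rightarrow> real"
  assumes mono: "mono F" and cont: "continuous_on UNIV F" and uv: "0 < v" "v < u"
    and G0: "open G0"
  shows "\<exists>G N. open G \<and> negligible N \<and> dini_crossing F u v \<inter> G0 \<subseteq> G \<union> N \<and>
           emeasure lborel G \<le> ennreal ((v / u) ^ n) * emeasure lborel G0"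
proof (induction n)
  case 0
  show ?case
    using G0 by (intro exI[of _ G0] exI[of _ "{}"]) auto
next
  case (Suc n)
  then obtain G N where GN: "open G" "negligible N" "dini_crossing F u v \<inter> G0 \<subseteq> G \<union> N"
      "emeasure lborel G \<le> ennreal ((v / u) ^ n) * emeasure lborel G0"
    by blast
  obtain G' N' where G'N': "open G'" "negligible N'" "dini_crossing F u v \<inter> G \<subseteq> G' \<union> N'"
      "emeasure lborel G' \<le> ennreal (v / u) * emeasure lborel G"
    using dini_crossing_contract[OF mono cont uv GN(1)] by blast
  have "emeasure lborel G' \<le> ennreal (v / u) * (ennreal ((v / u) ^ n) * emeasure lborel G0)"
    using G'N'(4) GN(4) by (meson mult_left_mono order_trans zero_le)
  also have "\<dots> = ennreal ((v / u) ^ Suc n) * emeasure lborel G0"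
    using uv by (simp add: mult.assoc[symmetric] ennreal_mult[symmetric])
  finally show ?case
    using GN(2,3) G'N'(1-3) by (intro exI[of _ G'] exI[of _ "N \<union> N'"]) auto
qed

lemma dini_crossing_empty:
  assumes "mono F" "v \<le> 0"
  shows "dini_crossing F u v = {}"
proof safe
  fix x assume "x \<in> dini_crossing F u v"
  then have "\<exists>\<^sub>F k in at_left 0. (F (x + k) - F x) / k < v"
    by (simp add: dini_crossing_def)
  then obtain k where "0 < k" "(F (x + - k) - F x) / - k < v"
    unfolding frequently_at_left_0_iff using zero_less_one by blast
  moreover have "F (x - k) \<le> F x"
    using assms(1) \<open>0 < k\<close> by (simp add: mono_def)
  ultimately show "x \<in> {}"
    using assms(2) mult_nonneg_nonpos[of k v] by (simp add: field_simps)
qed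

lemma dini_crossing_inter_interval_negligible:
  fixes F :: "real \<Rightarrow> real"
  assumes mono: "mono F" and cont: "continuous_on UNIV F" and uv: "0 < v" "v < u" and "a < b"
  shows "negligible (dini_crossing F u v \<inter> {a<..<b})"
proof (rule negligible_if_small_open_covers)
  fix e :: real assume "0 < e"
  have "(\<lambda>n. (v / u) ^ n * (b - a)) \<longlonglongrightarrow> 0 * (b - a)"
    using uv by (intro tendsto_mult LIMSEQ_power_zero) auto
  then have "\<forall>\<^sub>F n in sequentially. (v / u) ^ n * (b - a) < e"
    using \<open>0 < e\<close> by (intro order_tendstoD(2)) auto
  then obtain n where n: "(v / u) ^ n * (b - a) < e"
    unfolding eventually_sequentially by (meson order_refl)
  obtain G N where GN: "open G" "negligible N" "dini_crossing F u v \<inter> {a<..<b} \<subseteq> G \<union> N"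
      "emeasure lborel G \<le> ennreal ((v / u) ^ n) * emeasure lborel {a<..<b}"
    using dini_crossing_iterated_cover[OF mono cont uv, of "{a<..<b}" n] by auto
  have "ennreal ((v / u) ^ n) * emeasure lborel {a<..<b} = ennreal ((v / u) ^ n * (b - a))"
    using uv \<open>a < b\<close> by (simp add: ennreal_mult[symmetric])
  also have "\<dots> \<le> ennreal e"
    using n by (simp add: ennreal_leI)
  finally show "\<exists>G N. open G \<and> negligible N \<and> dini_crossing F u v \<inter> {a<..<b} \<subseteq> G \<union> N \<and>
      emeasure lborel G \<le> ennreal e"
    using GN order_trans by blast
qed

lemma dini_crossing_negligible:
  fixes F :: "real \<Rightarrow> real"
  assumes mono: "mono F" and cont: "continuous_on UNIV F" and "v < u"
  shows "negligible (dini_crossing F u v)"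
proof (cases "0 < v")
  case False
  then show ?thesis
    using dini_crossing_empty[OF mono] by simp
next
  case True
  show ?thesis
    unfolding negligible_on_intervals[of "dini_crossing F u v"]
  proof (intro allI)
    fix a b :: real
    have "negligible (dini_crossing F u v \<inter> {a - 1<..<b + 1})"
      by (cases "a - 1 < b + 1") (auto intro: dini_crossing_inter_interval_negligible[OF mono cont True \<open>v < u\<close>])
    then show "negligible (dini_crossing F u v \<inter> cbox a b)"
      by (rule negligible_subset) auto
  qed
qed

text \<open>If \<open>Q\<close> exceeds \<open>q\<close> frequently along \<open>F1\<close>, it cannot be frequently below \<open>p\<close> along
  \<open>F2\<close>; and if it were frequently below \<open>p\<close> along \<open>F1\<close>, then along \<open>F2\<close> it would have to stay
  above a rational \<open>r \<in> (p, q)\<close>, which is again a forbidden crossing.\<close>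

lemma eventually_ge_if_no_crossing:
  fixes Q :: "'a \<Rightarrow> real"
  assumes "F2 \<noteq> bot"
    and cross12: "\<And>u v. u \<in> \<rat> \<Longrightarrow> v \<in> \<rat> \<Longrightarrow> v < u \<Longrightarrow>
        \<not> ((\<exists>\<^sub>F k in F1. u < Q k) \<and> (\<exists>\<^sub>F k in F2. Q k < v))"
    and cross21: "\<And>u v. u \<in> \<rat> \<Longrightarrow> v \<in> \<rat> \<Longrightarrow> v < u \<Longrightarrow>
        \<not> ((\<exists>\<^sub>F k in F2. u < Q k) \<and> (\<exists>\<^sub>F k in F1. Q k < v))"
    and pq: "p \<in> \<rat>" "q \<in> \<rat>" "p < q" and high: "\<exists>\<^sub>F k in F1. q < Q k"
  shows "\<forall>\<^sub>F k in sup F1 F2. p \<le> Q k"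
proof -
  have F2: "\<forall>\<^sub>F k in F2. p \<le> Q k"
    using cross12[OF pq(2,1,3)] high by (auto simp: frequently_def not_less)
  have F1: "\<forall>\<^sub>F k in F1. p \<le> Q k"
  proof (rule ccontr)
    assume "\<not> (\<forall>\<^sub>F k in F1. p \<le> Q k)"
    then have low: "\<exists>\<^sub>F k in F1. Q k < p"
      by (simp add: frequently_def not_less)
    obtain r where r: "r \<in> \<rat>" "p < r" "r < q"
      using Rats_dense_in_real[OF pq(3)] by blast
    obtain r' where r': "r' \<in> \<rat>" "p < r'" "r' < r"
      using Rats_dense_in_real[OF r(2)] by blast
    have "\<forall>\<^sub>F k in F2. r \<le> Q k"
      using cross12[OF pq(2) r(1,3)] high by (auto simp: frequently_def not_less)
    then have "\<forall>\<^sub>F k in F2. r' < Q k"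
      by eventually_elim (use r' in auto)
    then have "\<exists>\<^sub>F k in F2. r' < Q k"
      using \<open>F2 \<noteq> bot\<close> eventually_frequently by blast
    then show False
      using cross21[OF r'(1) pq(1) r'(2)] low by blast
  qed
  show ?thesis
    using F1 F2 by (simp add: eventually_sup)
qed

lemma eventually_dichotomy_if_no_crossing:
  fixes Q :: "'a \<Rightarrow> real"
  assumes "F1 \<noteq> bot" "F2 \<noteq> bot"
    and cross12: "\<And>u v. u \<in> \<rat> \<Longrightarrow> v \<in> \<rat> \<Longrightarrow> v < u \<Longrightarrow>
        \<not> ((\<exists>\<^sub>F k in F1. u < Q k) \<and> (\<exists>\<^sub>F k in F2. Q k < v))"
    and cross21: "\<And>u v. u \<in> \<rat> \<Longrightarrow> v \<in> \<rat> \<Longrightarrow> v < u \<Longrightarrow>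
        \<not> ((\<exists>\<^sub>F k in F2. u < Q k) \<and> (\<exists>\<^sub>F k in F1. Q k < v))"
    and pq: "p \<in> \<rat>" "q \<in> \<rat>" "p < q"
  shows "(\<forall>\<^sub>F k in sup F1 F2. p \<le> Q k) \<or> (\<forall>\<^sub>F k in sup F1 F2. Q k \<le> q)"
proof (cases "(\<exists>\<^sub>F k in F1. q < Q k) \<or> (\<exists>\<^sub>F k in F2. q < Q k)")
  case True
  then show ?thesis
  proof
    assume "\<exists>\<^sub>F k in F1. q < Q k"
    then show ?thesis
      using eventually_ge_if_no_crossing[OF \<open>F2 \<noteq> bot\<close> cross12 cross21 pq] by blast
  next
    assume "\<exists>\<^sub>F k in F2. q < Q k"
    then have "\<forall>\<^sub>F k in sup F2 F1. p \<le> Q k"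
      using eventually_ge_if_no_crossing[OF \<open>F1 \<noteq> bot\<close> cross21 cross12 pq] by blast
    then show ?thesis
      by (simp add: sup_commute)
  qed
qed (auto simp: frequently_def not_less eventually_sup)

lemma tendsto_if_rational_dichotomy:
  fixes Q :: "'a \<Rightarrow> real"
  assumes "F \<noteq> bot" and bounded: "\<forall>\<^sub>F k in F. Q k \<in> {m..M}"
    and dichotomy: "\<And>p q. p \<in> \<rat> \<Longrightarrow> q \<in> \<rat> \<Longrightarrow> p < q \<Longrightarrow>
        (\<forall>\<^sub>F k in F. p \<le> Q k) \<or> (\<forall>\<^sub>F k in F. Q k \<le> q)"
  shows "\<exists>s. (Q \<longlongrightarrow> s) F"
proof -
  define A where "A = {p \<in> \<rat>. \<forall>\<^sub>F k in F. p \<le> Q k}"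
  obtain p0 where p0: "p0 \<in> \<rat>" "p0 < m"
    using Rats_dense_in_real[of "m - 1" m] by auto
  have "p0 \<in> A"
    unfolding A_def using p0 bounded by (auto elim: eventually_mono)
  have A_le: "p \<le> M" if "p \<in> A" for p
  proof -
    have "\<forall>\<^sub>F k in F. p \<le> M"
      using that bounded unfolding A_def by (auto elim: eventually_elim2)
    then show ?thesis
      using \<open>F \<noteq> bot\<close> by (simp add: eventually_const_iff)
  qed
  then have bdd: "bdd_above A"
    by (auto simp: bdd_above_def)
  have "(Q \<longlongrightarrow> Sup A) F"
  proof (rule order_tendstoI)
    fix a assume "a < Sup A"
    then obtain p where "p \<in> A" "a < p"
      using less_cSup_iff[of A a] \<open>p0 \<in> A\<close> bdd by blast
    then show "\<forall>\<^sub>F k in F. a < Q k"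
      unfolding A_def by (auto elim: eventually_mono)
  next
    fix a assume "Sup A < a"
    obtain p where p: "p \<in> \<rat>" "Sup A < p" "p < a"
      using Rats_dense_in_real[OF \<open>Sup A < a\<close>] by blast
    obtain q where q: "q \<in> \<rat>" "p < q" "q < a"
      using Rats_dense_in_real[OF p(3)] by blast
    have "p \<notin> A"
      using p(2) cSup_upper[OF _ bdd] by force
    then have "\<forall>\<^sub>F k in F. Q k \<le> q"
      using dichotomy[OF p(1) q(1,2)] p(1) unfolding A_def by blast
    then show "\<forall>\<^sub>F k in F. Q k < a"
      by eventually_elim (use q in auto)
  qed
  then show ?thesis ..
qed

lemma dini_crossing_reflect:
  fixes F :: "real \<Rightarrow> real"
  shows "- x \<in> dini_crossing (\<lambda>t. - F (- t)) u v \<longleftrightarrow>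
    (\<exists>\<^sub>F k in at_left 0. u < (F (x + k) - F x) / k) \<and>
    (\<exists>\<^sub>F k in at_right 0. (F (x + k) - F x) / k < v)"
proof -
  have eq: "(- F (- (- x + k)) - (- F x)) / k = (F (x + - k) - F x) / - k"
    and eq': "(- F (- (- x + - k)) - (- F x)) / - k = (F (x + k) - F x) / k" for k
    by (simp_all add: minus_divide_right[symmetric] minus_divide_left add.commute)
  show ?thesis
    by (simp only: dini_crossing_def mem_Collect_eq minus_minus eq eq' frequently_at_left_0_iff
        frequently_at_right_0_iff conj_commute)
qed

lemma differentiable_if_not_dini_crossing:
  fixes F :: "real \<Rightarrow> real"
  assumes mono: "mono F" and lip: "L-lipschitz_on UNIV F"
    and right: "\<And>u v. u \<in> \<rat> \<Longrightarrow> v \<in> \<rat> \<Longrightarrow> v < u \<Longrightarrow> x \<notin> dini_crossing F u v"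
    and left: "\<And>u v. u \<in> \<rat> \<Longrightarrow> v \<in> \<rat> \<Longrightarrow> v < u \<Longrightarrow> - x \<notin> dini_crossing (\<lambda>t. - F (- t)) u v"
  shows "F differentiable (at x)"
proof -
  define Q where "Q k = (F (x + k) - F x) / k" for k
  have cross12: "\<not> ((\<exists>\<^sub>F k in at_right 0. u < Q k) \<and> (\<exists>\<^sub>F k in at_left 0. Q k < v))"
    if "u \<in> \<rat>" "v \<in> \<rat>" "v < u" for u v
    using right[OF that] by (simp add: dini_crossing_def Q_def)
  have cross21: "\<not> ((\<exists>\<^sub>F k in at_left 0. u < Q k) \<and> (\<exists>\<^sub>F k in at_right 0. Q k < v))"
    if "u \<in> \<rat>" "v \<in> \<rat>" "v < u" for u v
    using left[OF that] unfolding dini_crossing_reflect Q_def by blast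
  have bounded: "\<forall>\<^sub>F k in at 0. Q k \<in> {0..L}"
  proof (rule eventually_at_filter[THEN iffD2, OF always_eventually], intro allI impI)
    fix k :: real assume "k \<noteq> 0"
    have "0 \<le> Q k"
      using mono \<open>k \<noteq> 0\<close> by (cases "0 < k") (auto simp: Q_def mono_def intro!: divide_nonneg_pos divide_nonpos_neg)
    moreover have "\<bar>F (x + k) - F x\<bar> \<le> L * \<bar>k\<bar>"
      using lipschitz_onD[OF lip, of "x + k" x] by (simp add: dist_real_def)
    then have "\<bar>Q k\<bar> \<le> L"
      using \<open>k \<noteq> 0\<close> by (simp add: Q_def abs_divide pos_divide_le_eq)
    then have "Q k \<le> L"
      by simp
    ultimately show "Q k \<in> {0..L}"
      by simp
  qed
  have "\<exists>s. (Q \<longlongrightarrow> s) (at 0)"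
  proof (rule tendsto_if_rational_dichotomy[OF _ bounded])
    fix p q :: real assume "p \<in> \<rat>" "q \<in> \<rat>" "p < q"
    then show "(\<forall>\<^sub>F k in at 0. p \<le> Q k) \<or> (\<forall>\<^sub>F k in at 0. Q k \<le> q)"
      unfolding at_eq_sup_left_right
      by (intro eventually_dichotomy_if_no_crossing cross12 cross21) auto
  qed simp
  then show ?thesis
    unfolding real_differentiable_def DERIV_def Q_def by blast
qed

text \<open>The reflection \<open>t \<mapsto> - F (- t)\<close> turns the two remaining Dini crossings (upper left above
  lower right) into instances of \<open>dini_crossing\<close>.\<close>

theorem mono_lipschitz_differentiable_ae:
  fixes F :: "real \<Rightarrow> real"
  assumes mono: "mono F" and lip: "L-lipschitz_on UNIV F"
  shows "negligible {x. \<not> F differentiable (at x)}"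
proof -
  define F' where "F' t = - F (- t)" for t
  define B where "B = (\<Union>(u, v)\<in>{(u, v). u \<in> \<rat> \<and> v \<in> \<rat> \<and> v < u}.
      dini_crossing F u v \<union> uminus ` dini_crossing F' u v)"
  have cont: "continuous_on UNIV F"
    using lip by (rule lipschitz_on_continuous_on)
  have "mono F'"
    using mono by (simp add: F'_def mono_def)
  moreover have "continuous_on UNIV F'"
    unfolding F'_def by (intro continuous_intros continuous_on_compose2[OF cont]) auto
  ultimately have "negligible (uminus ` dini_crossing F' u v)" if "v < u" for u v
    using dini_crossing_negligible[OF _ _ that]
    by (intro negligible_differentiable_image_negligible)
       (auto intro!: derivative_intros simp: differentiable_on_def differentiable_def)
  moreover have "negligible (dini_crossing F u v)" if "v < u" for u v
    using dini_crossing_negligible[OF mono cont that] .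
  ultimately have "negligible B"
    unfolding B_def
    by (intro negligible_countable_Union countable_image
        countable_subset[OF _ countable_SIGMA[OF countable_rat countable_rat]]) auto
  moreover have "{x. \<not> F differentiable (at x)} \<subseteq> B"
  proof
    fix x assume "x \<in> {x. \<not> F differentiable (at x)}"
    then obtain u v where uv: "u \<in> \<rat>" "v \<in> \<rat>" "v < u"
        "x \<in> dini_crossing F u v \<or> - x \<in> dini_crossing F' u v"
      using differentiable_if_not_dini_crossing[OF mono lip, of x] unfolding F'_def by blast
    then have "x \<in> dini_crossing F u v \<union> uminus ` dini_crossing F' u v"
      using image_eqI[of x uminus "- x"] by auto
    then show "x \<in> B"
      using uv(1-3) unfolding B_def by blast
  qed
  ultimately show ?thesis
    using negligible_subset by blast
qed

lemma differentiable_ae_if_mono_lipschitz_on: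
  fixes f :: "real \<Rightarrow> real"
  assumes mono: "mono_on {a..b} f" and lip: "L-lipschitz_on {a..b} f" and "a \<le> b"
  obtains N where "negligible N" "\<And>t. t \<in> {a<..<b} - N \<Longrightarrow> f differentiable (at t)"
proof -
  define c where "c t = max a (min b t)" for t
  define f' where "f' t = f (c t)" for t
  have "1-lipschitz_on UNIV c"
    by (rule lipschitz_onI) (auto simp: c_def dist_real_def)
  moreover have "L-lipschitz_on (c ` UNIV) f"
    using lip by (rule lipschitz_on_subset) (use \<open>a \<le> b\<close> in \<open>auto simp: c_def\<close>)
  ultimately have "(L * 1)-lipschitz_on UNIV f'"
    unfolding f'_def by (rule lipschitz_on_compose2)
  moreover have "mono f'"
    using mono \<open>a \<le> b\<close> unfolding f'_def c_def by (intro monoI) (auto elim!: mono_onD)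
  ultimately have N: "negligible {t. \<not> f' differentiable (at t)}"
    using mono_lipschitz_differentiable_ae by blast
  have "f differentiable (at t)" if t: "t \<in> {a<..<b}" "f' differentiable (at t)" for t
  proof -
    obtain D where "(f' has_real_derivative D) (at t)"
      using t(2) real_differentiable_def by blast
    then have "(f has_real_derivative D) (at t)"
      by (rule has_field_derivative_transform_within_open[of _ _ _ "{a<..<b}"])
         (use t in \<open>auto simp: f'_def c_def\<close>)
    then show ?thesis
      using real_differentiable_def by blast
  qed
  then show ?thesis
    using that N by blast
qed

section \<open>The fundamental theorem of calculus for Lipschitz functions\<close>

lemma negligible_spikes_Icc_Ioo_diff:
  fixes f :: "real \<Rightarrow> real"
  assumes "negligible N"
  shows "negligible {t \<in> {a..b} - ({a<..<b} - N). f t \<noteq> 0}"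
    and "negligible {t \<in> ({a<..<b} - N) - {a..b}. f t \<noteq> 0}"
proof -
  have "negligible ({a, b} \<union> N)"
    using assms by simp
  then show "negligible {t \<in> {a..b} - ({a<..<b} - N). f t \<noteq> 0}"
    by (rule negligible_subset) auto
  have "{t \<in> ({a<..<b} - N) - {a..b}. f t \<noteq> 0} = {}"
    by auto
  then show "negligible {t \<in> ({a<..<b} - N) - {a..b}. f t \<noteq> 0}"
    by (simp only: negligible_empty)
qed

lemma integral_difference_quotient_tendsto:
  fixes F :: "real \<Rightarrow> real"
  assumes cont: "continuous_on UNIV F" and "a \<le> b"
  shows "((\<lambda>z. integral {a..b} (\<lambda>t. (F (t + z) - F t) / z)) \<longlongrightarrow> F b - F a) (at_right 0)"
proof -
  define G where "G s = integral {a - 1..s} F" for s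
  have G_deriv: "(G has_real_derivative F t) (at t)" if "a - 1 < t" for t
  proof -
    have "(G has_real_derivative F t) (at t within {a - 1..t + 1})"
      unfolding G_def using that
      by (intro integral_has_real_derivative continuous_on_subset[OF cont]) auto
    then show ?thesis
      using at_within_Icc_at[of "a - 1" t "t + 1"] that by simp
  qed
  have shift: "((\<lambda>t. F (t + z)) has_integral G (b + z) - G (a + z)) {a..b}" if "0 \<le> z" for z
  proof (rule fundamental_theorem_of_calculus[OF \<open>a \<le> b\<close>])
    fix t assume "t \<in> {a..b}"
    then have "(G has_real_derivative F (t + z)) (at (t + z))"
      using that by (intro G_deriv) auto
    then show "((\<lambda>t. G (t + z)) has_vector_derivative F (t + z)) (at t within {a..b})"
      by (simp add: DERIV_shift has_real_derivative_iff_has_vector_derivative[symmetric]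
          has_field_derivative_at_within)
  qed
  have integral_eq: "(G (b + z) - G b) / z - (G (a + z) - G a) / z =
      integral {a..b} (\<lambda>t. (F (t + z) - F t) / z)" if "0 < z" for z
  proof -
    have "((\<lambda>t. (F (t + z) - F (t + 0)) / z) has_integral
        ((G (b + z) - G (a + z)) - (G (b + 0) - G (a + 0))) / z) {a..b}"
      using that by (intro has_integral_divide has_integral_diff shift) auto
    then show ?thesis
      by (simp add: integral_unique diff_divide_distrib)
  qed
  have quotient: "((\<lambda>z. (G (s + z) - G s) / z) \<longlongrightarrow> F s) (at_right 0)" if "a \<le> s" for s
    using G_deriv[of s] that filterlim_at_split unfolding DERIV_def by fastforce
  have "((\<lambda>z. (G (b + z) - G b) / z - (G (a + z) - G a) / z) \<longlongrightarrow> F b - F a) (at_right 0)"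
    using tendsto_diff[OF quotient[of b] quotient[of a]] \<open>a \<le> b\<close> by simp
  then show ?thesis
  proof (rule Lim_transform_eventually)
    show "\<forall>\<^sub>F z in at_right 0. (G (b + z) - G b) / z - (G (a + z) - G a) / z =
        integral {a..b} (\<lambda>t. (F (t + z) - F t) / z)"
      using eventually_at_right_less by (rule eventually_mono) (rule integral_eq)
  qed
qed

lemma integral_difference_quotient_tendsto_deriv:
  fixes F :: "real \<Rightarrow> real" and h :: "nat \<Rightarrow> real"
  assumes lip: "L-lipschitz_on UNIV F" and N: "negligible N"
    and diff: "\<And>t. t \<in> {a<..<b} - N \<Longrightarrow> F differentiable (at t)"
    and h: "filterlim h (at_right 0) sequentially" "\<And>n. 0 < h n"
  shows "deriv F integrable_on {a..b}"
    and "(\<lambda>n. integral {a..b} (\<lambda>t. (F (t + h n) - F t) / h n)) \<longlonglongrightarrow> integral {a..b} (deriv F)"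
proof -
  define q where "q n t = (F (t + h n) - F t) / h n" for n t
  define S where "S = {a<..<b} - N"
  note S_ae = negligible_spikes_Icc_Ioo_diff[OF N, of a b, folded S_def]
  have cont: "continuous_on UNIV F"
    using lip by (rule lipschitz_on_continuous_on)
  have "continuous_on UNIV (q n)" for n
    unfolding q_def using h(2)[of n]
    by (intro continuous_intros continuous_on_compose2[OF cont]) auto
  then have q_int: "q n integrable_on S" for n
    by (rule integrable_spike_set[OF integrable_continuous_interval[OF continuous_on_subset] S_ae]) simp
  have q_bound: "norm (q n t) \<le> L" for n t
  proof -
    have "\<bar>F (t + h n) - F t\<bar> \<le> L * h n"
      using lipschitz_onD[OF lip, of "t + h n" t] h(2)[of n] by (simp add: dist_real_def)
    then show ?thesis
      using h(2)[of n] by (simp add: q_def abs_divide pos_divide_le_eq)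
  qed
  have q_lim: "(\<lambda>n. q n t) \<longlonglongrightarrow> deriv F t" if "t \<in> S" for t
  proof -
    have "((\<lambda>k. (F (t + k) - F t) / k) \<longlongrightarrow> deriv F t) (at 0)"
      using diff[of t] that unfolding S_def DERIV_def[symmetric]
      by (simp add: DERIV_deriv_iff_real_differentiable)
    then have "((\<lambda>k. (F (t + k) - F t) / k) \<longlongrightarrow> deriv F t) (at_right 0)"
      using filterlim_at_split by blast
    from filterlim_compose[OF this h(1)] show ?thesis
      by (simp add: q_def)
  qed
  have L_int: "(\<lambda>_. L) integrable_on S"
    using integrable_spike_set[OF integrable_const_ivl S_ae] .
  have "deriv F integrable_on S" "(\<lambda>n. integral S (q n)) \<longlonglongrightarrow> integral S (deriv F)"
    using dominated_convergence[OF q_int L_int q_bound q_lim] by auto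
  moreover have "integral S f = integral {a..b} f" for f :: "real \<Rightarrow> real"
    by (rule integral_spike_set[OF S_ae(2,1)])
  ultimately show "deriv F integrable_on {a..b}"
    and "(\<lambda>n. integral {a..b} (\<lambda>t. (F (t + h n) - F t) / h n)) \<longlonglongrightarrow> integral {a..b} (deriv F)"
    using integrable_spike_set[OF _ S_ae(2,1)] unfolding q_def by simp_all
qed

text \<open>The integral of the difference quotient with step \<open>h\<close> over \<open>[a, b]\<close> is the average of
  \<open>F\<close> over \<open>[b, b + h]\<close> minus that over \<open>[a, a + h]\<close>, while the quotients themselves converge
  dominatedly to \<open>deriv F\<close> almost everywhere.\<close>

lemma has_integral_deriv_if_lipschitz_UNIV:
  fixes F :: "real \<Rightarrow> real"
  assumes lip: "L-lipschitz_on UNIV F" and "a \<le> b" and N: "negligible N"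
    and diff: "\<And>t. t \<in> {a<..<b} - N \<Longrightarrow> F differentiable (at t)"
  shows "(deriv F has_integral F b - F a) {a..b}"
proof -
  define h :: "nat \<Rightarrow> real" where "h n = inverse (real (Suc n))" for n
  have h: "filterlim h (at_right 0) sequentially" "\<And>n. 0 < h n"
    unfolding h_def by (intro tendsto_imp_filterlim_at_right LIMSEQ_inverse_real_of_nat always_eventually) simp_all
  have "(\<lambda>n. integral {a..b} (\<lambda>t. (F (t + h n) - F t) / h n)) \<longlonglongrightarrow> F b - F a"
    using filterlim_compose[OF integral_difference_quotient_tendsto[OF
        lipschitz_on_continuous_on[OF lip] \<open>a \<le> b\<close>] h(1)] .
  then have "integral {a..b} (deriv F) = F b - F a"
    using integral_difference_quotient_tendsto_deriv(2)[OF lip N diff h] LIMSEQ_unique by blast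
  then show ?thesis
    using integral_difference_quotient_tendsto_deriv(1)[OF lip N diff h]
    by (metis has_integral_integrable_integral)
qed

lemma has_integral_deriv_if_lipschitz:
  fixes F :: "real \<Rightarrow> real"
  assumes lip: "L-lipschitz_on {a..b} F" and "a \<le> b" and N: "negligible N"
    and diff: "\<And>t. t \<in> {a<..<b} - N \<Longrightarrow> F differentiable (at t)"
  shows "(deriv F has_integral F b - F a) {a..b}"
proof -
  define c where "c t = max a (min b t)" for t
  define F' where "F' t = F (c t)" for t
  have "1-lipschitz_on UNIV c"
    by (rule lipschitz_onI) (auto simp: c_def dist_real_def)
  moreover have "L-lipschitz_on (c ` UNIV) F"
    using lip by (rule lipschitz_on_subset) (use \<open>a \<le> b\<close> in \<open>auto simp: c_def\<close>)
  ultimately have lip': "(L * 1)-lipschitz_on UNIV F'"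
    unfolding F'_def by (rule lipschitz_on_compose2)
  have F'_eq: "F' t = F t" if "t \<in> {a..b}" for t
    using that by (simp add: F'_def c_def)
  have near: "\<forall>\<^sub>F s in nhds t. F' s = F s" if "t \<in> {a<..<b}" for t
    using that by (intro eventually_nhds_in_open[THEN eventually_mono, of "{a<..<b}"]) (auto simp: F'_eq)
  have deriv_eq: "deriv F' t = deriv F t" if "t \<in> {a<..<b}" for t
    using near[OF that] by (rule deriv_cong_ev) simp
  have "(deriv F' has_integral F' b - F' a) {a..b}"
  proof (rule has_integral_deriv_if_lipschitz_UNIV[OF lip' \<open>a \<le> b\<close> N])
    fix t assume t: "t \<in> {a<..<b} - N"
    then obtain D where "(F has_real_derivative D) (at t)"
      using diff real_differentiable_def by blast
    then have "(F' has_real_derivative D) (at t)"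
      by (rule has_field_derivative_transform_within_open[of _ _ _ "{a<..<b}"])
         (use t in \<open>auto simp: F'_eq\<close>)
    then show "F' differentiable (at t)"
      using real_differentiable_def by blast
  qed
  then have F'_int: "(deriv F' has_integral F b - F a) {a..b}"
    using \<open>a \<le> b\<close> by (simp add: F'_eq)
  show ?thesis
  proof (rule has_integral_spike[OF negligible_finite[of "{a, b}"] _ F'_int])
    fix t assume "t \<in> {a..b} - {a, b}"
    then show "deriv F t = deriv F' t"
      using deriv_eq by auto
  qed simp
qed

section \<open>Idempotents of the star product\<close>

lemma lipschitz_on_mult:
  fixes f g :: "'a::metric_space \<Rightarrow> real"
  assumes f: "A-lipschitz_on S f" and g: "B-lipschitz_on S g"
    and bounded: "\<And>x. x \<in> S \<Longrightarrow> \<bar>f x\<bar> \<le> M" "\<And>x. x \<in> S \<Longrightarrow> \<bar>g x\<bar> \<le> M'"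
    and "0 \<le> M" "0 \<le> M'"
  shows "(M * B + A * M')-lipschitz_on S (\<lambda>x. f x * g x)"
proof (rule lipschitz_onI)
  fix x y assume xy: "x \<in> S" "y \<in> S"
  have "f x * g x - f y * g y = f x * (g x - g y) + (f x - f y) * g y"
    by (simp add: algebra_simps)
  then have "\<bar>f x * g x - f y * g y\<bar> \<le> \<bar>f x\<bar> * \<bar>g x - g y\<bar> + \<bar>f x - f y\<bar> * \<bar>g y\<bar>"
    by (metis abs_mult abs_triangle_ineq)
  also have "\<dots> \<le> M * (B * dist x y) + (A * dist x y) * M'"
    using lipschitz_onD[OF f xy] lipschitz_onD[OF g xy] bounded xy \<open>0 \<le> M\<close> \<open>0 \<le> M'\<close>
    by (intro add_mono mult_mono) (auto simp: dist_real_def)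
  finally show "dist (f x * g x) (f y * g y) \<le> (M * B + A * M') * dist x y"
    by (simp add: dist_real_def algebra_simps)
next
  show "0 \<le> M * B + A * M'"
    using lipschitz_on_nonneg[OF f] lipschitz_on_nonneg[OF g] \<open>0 \<le> M\<close> \<open>0 \<le> M'\<close> by simp
qed

lemma lipschitz_on_inverse:
  fixes c :: real
  assumes "0 < c"
  shows "(1 / c\<^sup>2)-lipschitz_on {c..} (\<lambda>t. 1 / t)"
proof (rule lipschitz_onI)
  fix s t assume "s \<in> {c..}" "t \<in> {c..}"
  then have st: "c \<le> s" "c \<le> t"
    by auto
  have "\<bar>1 / s - 1 / t\<bar> = \<bar>s - t\<bar> / (s * t)"
    using st \<open>0 < c\<close> by (simp add: field_simps abs_minus_commute)
  also have "\<dots> \<le> \<bar>s - t\<bar> / c\<^sup>2"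
    using st \<open>0 < c\<close> by (intro divide_left_mono) (auto simp: power2_eq_square intro: mult_mono)
  finally show "dist (1 / s) (1 / t) \<le> 1 / c\<^sup>2 * dist s t"
    by (simp add: dist_real_def)
qed simp

lemma set_integral_eq_if_has_integral_nonneg:
  fixes f :: "real \<Rightarrow> real"
  assumes "(f has_integral I) S" "\<And>t. t \<in> S \<Longrightarrow> 0 \<le> f t"
  shows "(LINT t:S|lebesgue. f t) = I"
proof -
  have "f absolutely_integrable_on S"
    using assms by (intro nonnegative_absolutely_integrable_1 has_integral_integrable)
  then show ?thesis
    using assms(1) by (simp add: set_lebesgue_integral_eq_integral(2) integral_unique)
qed

lemma has_integral_0_nonneg_imp_negligible:
  fixes f :: "real \<Rightarrow> real"
  assumes "(f has_integral 0) S" and nonneg: "\<And>t. t \<in> S \<Longrightarrow> 0 \<le> f t"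
  shows "negligible {t \<in> S. f t \<noteq> 0}"
proof -
  have "f absolutely_integrable_on S"
    using assms by (intro nonnegative_absolutely_integrable_1 has_integral_integrable)
  then have int: "integrable lebesgue (\<lambda>t. indicator S t *\<^sub>R f t)"
    by (simp add: set_integrable_def)
  have "integral\<^sup>L lebesgue (\<lambda>t. indicator S t *\<^sub>R f t) = 0"
    using set_integral_eq_if_has_integral_nonneg[OF assms] by (simp add: set_lebesgue_integral_def)
  then have "AE t in lebesgue. indicator S t *\<^sub>R f t = 0"
    using int nonneg by (subst integral_nonneg_eq_0_iff_AE[symmetric]) (auto simp: indicator_def)
  then obtain N where "negligible N" "{t. indicator S t *\<^sub>R f t \<noteq> 0} \<subseteq> N"
    unfolding eventually_ae_filter_negligible by blast
  moreover have "{t \<in> S. f t \<noteq> 0} \<subseteq> {t. indicator S t *\<^sub>R f t \<noteq> 0}"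
    by (auto simp: indicator_def)
  ultimately show ?thesis
    using negligible_subset by blast
qed

locale lsl_delta =
  fixes \<delta> :: "real \<Rightarrow> real"
  assumes copD_LSL: "copD_LSL \<delta>"
begin

lemma delta_le: "0 \<le> u \<Longrightarrow> u \<le> 1 \<Longrightarrow> \<delta> u \<le> u"
  using copD_LSL unfolding copD_LSL_def copD_def by auto

lemma delta_zero: "\<delta> 0 = 0"
proof -
  have "0 \<le> \<delta> 0"
    using copD_LSL unfolding copD_LSL_def copD_def by auto
  then show ?thesis
    using delta_le[of 0] by simp
qed

definition ratio :: "real \<Rightarrow> real" where
  "ratio t = \<delta> t / t"

lemma ratio_mono: "0 < s \<Longrightarrow> s \<le> t \<Longrightarrow> t \<le> 1 \<Longrightarrow> ratio s \<le> ratio t"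
  using copD_LSL unfolding copD_LSL_def ratio_def by blast

lemma ratio_div_antimono: "0 < s \<Longrightarrow> s \<le> t \<Longrightarrow> t \<le> 1 \<Longrightarrow> ratio t / t \<le> ratio s / s"
  using copD_LSL unfolding copD_LSL_def ratio_def by (simp add: power2_eq_square)

lemma ratio_one: "ratio 1 = 1"
  using copD_LSL unfolding copD_LSL_def copD_def ratio_def by simp

lemma ratio_le_one: "0 < t \<Longrightarrow> t \<le> 1 \<Longrightarrow> ratio t \<le> 1"
  using delta_le[of t] by (simp add: ratio_def)

lemma ratio_ge: "0 < t \<Longrightarrow> t \<le> 1 \<Longrightarrow> t \<le> ratio t"
  using ratio_div_antimono[of t 1] by (simp add: ratio_one field_simps)

lemma ratio_pos: "0 < t \<Longrightarrow> t \<le> 1 \<Longrightarrow> 0 < ratio t"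
  using ratio_ge[of t] by simp

lemma abs_ratio_le_one: "0 < t \<Longrightarrow> t \<le> 1 \<Longrightarrow> \<bar>ratio t\<bar> \<le> 1"
  using ratio_ge[of t] ratio_le_one[of t] by simp

lemma ratio_lipschitz: "0 < e \<Longrightarrow> (1 / e)-lipschitz_on {e..1} ratio"
proof (rule lipschitz_on_leI)
  fix s t assume "0 < e" "s \<in> {e..1}" "t \<in> {e..1}" "s \<le> t"
  then have st: "0 < e" "e \<le> s" "s \<le> t" "t \<le> 1"
    by auto
  have "ratio t \<le> ratio s * t / s"
    using ratio_div_antimono[of s t] st by (simp add: field_simps)
  then have "ratio t - ratio s \<le> ratio s * (t - s) / s"
    using st by (simp add: field_simps)
  also have "\<dots> \<le> (t - s) / e"
    using ratio_le_one[of s] ratio_ge[of s] st by (intro frac_le mult_left_le_one_le) auto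
  finally show "dist (ratio s) (ratio t) \<le> 1 / e * dist s t"
    using ratio_mono[of s t] st by (simp add: dist_real_def)
qed simp

lemma ratio_differentiable_ae:
  assumes "0 < e" "e \<le> 1"
  obtains N where "negligible N" "\<And>t. t \<in> {e<..<1} - N \<Longrightarrow> ratio differentiable (at t)"
proof (rule differentiable_ae_if_mono_lipschitz_on[OF _ ratio_lipschitz[OF \<open>0 < e\<close>] \<open>e \<le> 1\<close>])
  show "mono_on {e..1} ratio"
    using \<open>0 < e\<close> by (intro mono_onI ratio_mono) auto
qed (use that in blast)

lemma deriv_ratio_nonneg:
  assumes "0 < t" "t < 1" "ratio differentiable (at t)"
  shows "0 \<le> deriv ratio t"
proof (rule mono_on_imp_deriv_nonneg)
  show "mono_on {0<..<1} ratio"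
    by (intro mono_onI ratio_mono) auto
qed (use assms in \<open>auto simp: DERIV_deriv_iff_real_differentiable interior_open\<close>)

lemma has_derivative_ratio_div:
  assumes "0 < t" "ratio differentiable (at t)"
  shows "((\<lambda>s. ratio s / s) has_real_derivative (t * deriv ratio t - ratio t) / t\<^sup>2) (at t)"
  using assms unfolding DERIV_deriv_iff_real_differentiable[symmetric]
  by (auto intro!: derivative_eq_intros simp: power2_eq_square algebra_simps)

lemma deriv_ratio_le:
  assumes "0 < t" "t < 1" "ratio differentiable (at t)"
  shows "t * deriv ratio t \<le> ratio t"
proof -
  have "0 \<le> - ((t * deriv ratio t - ratio t) / t\<^sup>2)"
  proof (rule mono_on_imp_deriv_nonneg)
    show "mono_on {0<..<1} (\<lambda>s. - (ratio s / s))"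
      by (intro mono_onI) (auto intro: ratio_div_antimono)
    show "((\<lambda>s. - (ratio s / s)) has_real_derivative - ((t * deriv ratio t - ratio t) / t\<^sup>2)) (at t)"
      using has_derivative_ratio_div[OF assms(1,3)] by (rule DERIV_minus)
  qed (use assms in \<open>auto simp: interior_open\<close>)
  then show ?thesis
    using assms by (simp add: divide_le_0_iff)
qed

definition energy :: "real \<Rightarrow> real" where
  "energy x = (LINT u:{x..1}|lebesgue. (deriv ratio u)\<^sup>2)"

definition defect :: "real \<Rightarrow> real" where
  "defect t = ratio t * (1 - ratio t) / t"

lemma star_self_eq: "x \<noteq> 0 \<Longrightarrow> star \<delta> \<delta> x = x * (ratio x)\<^sup>2 + x\<^sup>2 * energy x"
proof -
  assume "x \<noteq> 0"
  have "(\<lambda>t. \<delta> t / t) = ratio"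
    by (simp add: fun_eq_iff ratio_def)
  then show ?thesis
    using \<open>x \<noteq> 0\<close> by (simp add: star_def energy_def ratio_def power2_eq_square)
qed

lemma star_self_fixed_iff:
  assumes "0 < x"
  shows "star \<delta> \<delta> x = \<delta> x \<longleftrightarrow> energy x = defect x"
proof -
  have "\<delta> x = x * ratio x"
    using assms by (simp add: ratio_def)
  then have "star \<delta> \<delta> x = \<delta> x \<longleftrightarrow> x * (ratio x * (1 - ratio x) - x * energy x) = 0"
    using assms by (auto simp: star_self_eq power2_eq_square algebra_simps)
  also have "\<dots> \<longleftrightarrow> ratio x * (1 - ratio x) = x * energy x"
    using assms by simp
  also have "\<dots> \<longleftrightarrow> energy x = defect x"
    using assms by (auto simp: defect_def field_simps)
  finally show ?thesis .
qed

lemma ratio_div_lipschitz: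
  assumes "0 < e"
  obtains L where "L-lipschitz_on {e..1} (\<lambda>t. ratio t / t)"
proof -
  have "(1 * (1 / e\<^sup>2) + 1 / e * (1 / e))-lipschitz_on {e..1} (\<lambda>t. ratio t * (1 / t))"
  proof (rule lipschitz_on_mult[OF ratio_lipschitz[OF assms]])
    show "(1 / e\<^sup>2)-lipschitz_on {e..1} (\<lambda>t. 1 / t)"
      using lipschitz_on_inverse[OF assms] by (rule lipschitz_on_subset) auto
  qed (use assms abs_ratio_le_one in \<open>auto simp: frac_le\<close>)
  then show ?thesis
    using that by simp
qed

lemma defect_lipschitz:
  assumes "0 < e"
  obtains L where "L-lipschitz_on {e..1} defect"
proof -
  have bounds: "\<bar>ratio t\<bar> \<le> 1" "\<bar>1 - ratio t\<bar> \<le> 1" if "t \<in> {e..1}" for t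
    using that assms ratio_ge[of t] ratio_le_one[of t] by auto
  have "(0 + 1 / e)-lipschitz_on {e..1} (\<lambda>t. 1 - ratio t)"
    by (intro lipschitz_on_diff lipschitz_on_constant ratio_lipschitz assms)
  then have "(1 * (1 / e) + 1 / e * 1)-lipschitz_on {e..1} (\<lambda>t. ratio t * (1 - ratio t))"
    using ratio_lipschitz[OF assms] bounds by (intro lipschitz_on_mult) auto
  then have "(1 * (1 / e\<^sup>2) + (1 * (1 / e) + 1 / e * 1) * (1 / e))-lipschitz_on {e..1}
      (\<lambda>t. ratio t * (1 - ratio t) * (1 / t))"
  proof (rule lipschitz_on_mult)
    show "(1 / e\<^sup>2)-lipschitz_on {e..1} (\<lambda>t. 1 / t)"
      using lipschitz_on_inverse[OF assms] by (rule lipschitz_on_subset) auto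
  qed (use assms bounds in \<open>auto simp: abs_mult frac_le intro: mult_le_one\<close>)
  then show ?thesis
    using that by (simp add: defect_def)
qed

lemma has_derivative_defect:
  assumes "0 < t" "ratio differentiable (at t)"
  shows "(defect has_real_derivative
      (deriv ratio t * (1 - 2 * ratio t) * t - ratio t * (1 - ratio t)) / t\<^sup>2) (at t)"
proof -
  have "(defect has_real_derivative
      ((deriv ratio t * (1 - ratio t) + (0 - deriv ratio t) * ratio t) * t - ratio t * (1 - ratio t) * 1)
        / (t * t)) (at t)"
    using assms unfolding defect_def[abs_def] DERIV_deriv_iff_real_differentiable[symmetric]
    by (intro DERIV_divide DERIV_mult DERIV_diff DERIV_ident DERIV_const) auto
  then show ?thesis
    by (simp add: power2_eq_square algebra_simps)
qed

lemma deriv_ratio_sq_plus_deriv_defect: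
  assumes "0 < t" "ratio differentiable (at t)"
  shows "(deriv ratio t)\<^sup>2 + deriv defect t =
    (t * deriv ratio t - ratio t) * (t * deriv ratio t + 1 - ratio t) / t\<^sup>2"
  using DERIV_imp_deriv[OF has_derivative_defect[OF assms]] assms(1)
  by (simp add: field_simps power2_eq_square)

lemma deriv_ratio_sq_plus_deriv_defect_nonpos:
  assumes t: "0 < t" "t < 1" "ratio differentiable (at t)" "ratio t < 1"
  shows "(deriv ratio t)\<^sup>2 + deriv defect t \<le> 0"
    and "(deriv ratio t)\<^sup>2 + deriv defect t = 0 \<Longrightarrow> t * deriv ratio t = ratio t"
proof -
  have pos: "0 < t * deriv ratio t + 1 - ratio t"
    using mult_nonneg_nonneg[of t "deriv ratio t"] deriv_ratio_nonneg[OF t(1-3)] t(1,4) by linarith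
  have "t * deriv ratio t - ratio t \<le> 0"
    using deriv_ratio_le[OF t(1-3)] by simp
  then have "(t * deriv ratio t - ratio t) * (t * deriv ratio t + 1 - ratio t) \<le> 0"
    using pos by (simp add: mult_nonpos_nonneg)
  then show "(deriv ratio t)\<^sup>2 + deriv defect t \<le> 0"
    unfolding deriv_ratio_sq_plus_deriv_defect[OF t(1,3)] by (simp add: divide_nonpos_nonneg)
  assume "(deriv ratio t)\<^sup>2 + deriv defect t = 0"
  then have "(t * deriv ratio t - ratio t) * (t * deriv ratio t + 1 - ratio t) = 0"
    using t(1) unfolding deriv_ratio_sq_plus_deriv_defect[OF t(1,3)] by simp
  then show "t * deriv ratio t = ratio t"
    using pos by simp
qed

lemma has_integral_deriv_ratio_div:
  assumes "0 < x" "x \<le> b" "b \<le> 1"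
  shows "(deriv (\<lambda>t. ratio t / t) has_integral ratio b / b - ratio x / x) {x..b}"
proof -
  obtain N where N: "negligible N" "\<And>t. t \<in> {x<..<1} - N \<Longrightarrow> ratio differentiable (at t)"
    using ratio_differentiable_ae[of x] assms by auto
  obtain L where "L-lipschitz_on {x..1} (\<lambda>t. ratio t / t)"
    using ratio_div_lipschitz[OF assms(1)] .
  then show ?thesis
  proof (rule has_integral_deriv_if_lipschitz[OF lipschitz_on_subset _ N(1)])
    fix t assume "t \<in> {x<..<b} - N"
    then have "0 < t" "ratio differentiable (at t)"
      using assms N(2) by auto
    then show "(\<lambda>t. ratio t / t) differentiable (at t)"
      using has_derivative_ratio_div real_differentiable_def by blast
  qed (use assms in auto)
qed

lemma has_integral_deriv_defect:
  assumes "0 < x" "x \<le> b" "b \<le> 1"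
  shows "(deriv defect has_integral defect b - defect x) {x..b}"
proof -
  obtain N where N: "negligible N" "\<And>t. t \<in> {x<..<1} - N \<Longrightarrow> ratio differentiable (at t)"
    using ratio_differentiable_ae[of x] assms by auto
  obtain L where "L-lipschitz_on {x..1} defect"
    using defect_lipschitz[OF assms(1)] .
  then show ?thesis
  proof (rule has_integral_deriv_if_lipschitz[OF lipschitz_on_subset _ N(1)])
    fix t assume "t \<in> {x<..<b} - N"
    then have "0 < t" "ratio differentiable (at t)"
      using assms N(2) by auto
    then show "defect differentiable (at t)"
      using has_derivative_defect real_differentiable_def by blast
  qed (use assms in auto)
qed

lemma ratio_threshold:
  assumes "0 < t0" "t0 \<le> 1" "ratio t0 \<noteq> 1"
  obtains a where "t0 < a" "a \<le> 1" "\<And>t. a \<le> t \<Longrightarrow> t \<le> 1 \<Longrightarrow> ratio t = 1"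
    "\<And>t. 0 < t \<Longrightarrow> t < a \<Longrightarrow> ratio t < 1"
proof -
  define A where "A = {t \<in> {t0..1}. ratio t = 1}"
  have "continuous_on {t0..1} ratio"
    using ratio_lipschitz[OF \<open>0 < t0\<close>] by (rule lipschitz_on_continuous_on)
  then have "closed A"
    unfolding A_def by (rule continuous_closed_preimage_constant) simp
  moreover have "1 \<in> A" "bdd_below A"
    using assms by (auto simp: A_def ratio_one intro: bdd_belowI[of _ t0])
  ultimately have "Inf A \<in> A"
    using closed_contains_Inf by blast
  then have a: "t0 \<le> Inf A" "Inf A \<le> 1" "ratio (Inf A) = 1"
    by (auto simp: A_def)
  then have "t0 < Inf A"
    using assms(3) by (cases "t0 = Inf A") auto
  moreover have "ratio t = 1" if "Inf A \<le> t" "t \<le> 1" for t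
    using ratio_mono[of "Inf A" t] ratio_le_one[of t] a that \<open>0 < t0\<close> by simp
  moreover have "ratio t < 1" if "0 < t" "t < Inf A" for t
  proof (cases "t0 \<le> t")
    case True
    then have "t \<notin> A"
      using that cInf_lower[OF _ \<open>bdd_below A\<close>, of t] by auto
    then show ?thesis
      using True that a ratio_le_one[of t] by (auto simp: A_def)
  next
    case False
    then show ?thesis
      using ratio_mono[of t t0] ratio_le_one[of t0] assms that by simp
  qed
  ultimately show ?thesis
    using that a(2) by blast
qed

context
  fixes a :: real
  assumes fixed: "\<And>x. 0 < x \<Longrightarrow> x \<le> 1 \<Longrightarrow> energy x = defect x"
    and a_le_one: "a \<le> 1"
    and ratio_above: "\<And>t. a \<le> t \<Longrightarrow> t \<le> 1 \<Longrightarrow> ratio t = 1"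
    and ratio_below: "\<And>t. 0 < t \<Longrightarrow> t < a \<Longrightarrow> ratio t < 1"
begin

lemma deriv_ratio_above: "a < u \<Longrightarrow> u < 1 \<Longrightarrow> deriv ratio u = 0"
proof -
  assume u: "a < u" "u < 1"
  have "(ratio has_real_derivative 0) (at u)"
    by (rule has_field_derivative_transform_within_open[of "\<lambda>_. 1" _ _ "{a<..<1}"])
       (use u ratio_above in auto)
  then show ?thesis
    by (rule DERIV_imp_deriv)
qed

lemma energy_has_integral_below:
  assumes x: "0 < x" "x < a"
  shows "((\<lambda>u. (deriv ratio u)\<^sup>2) has_integral defect x) {x..a}"
proof -
  let ?H = "\<lambda>u. (deriv ratio u)\<^sup>2"
  have "0 < ratio x" "ratio x < 1"
    using x a_le_one ratio_pos ratio_below by auto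
  then have "energy x \<noteq> 0"
    using fixed[of x] x a_le_one by (simp add: defect_def)
  \<comment> \<open>a non-integrable function has Lebesgue integral \<open>0\<close>, so this forces integrability\<close>
  then have H_abs: "?H absolutely_integrable_on {x..1}"
    unfolding energy_def set_lebesgue_integral_def set_integrable_def
    using not_integrable_integral_eq by blast
  then have H_int: "?H integrable_on {x..a}"
    using x a_le_one by (intro integrable_on_subinterval[OF set_lebesgue_integral_eq_integral(1)]) auto
  have "(?H has_integral 0) {a..1}"
    by (rule has_integral_spike_finite[where S="{a, 1}" and f="\<lambda>_. 0"]) (auto simp: deriv_ratio_above)
  then have "(?H has_integral integral {x..a} ?H + 0) {x..1}"
    using x a_le_one by (intro has_integral_combine[OF _ _ integrable_integral[OF H_int]]) auto
  moreover have "energy x = integral {x..1} ?H"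
    unfolding energy_def using H_abs by (rule set_lebesgue_integral_eq_integral(2))
  ultimately have "integral {x..a} ?H = defect x"
    using fixed[of x] x a_le_one by (simp add: integral_unique)
  then show ?thesis
    using H_int by (metis integrable_integral)
qed

lemma ratio_linear_ae_below:
  assumes x: "0 < x" "x < a"
  obtains N where "negligible N"
    "\<And>t. t \<in> {x<..<a} - N \<Longrightarrow> ratio differentiable (at t) \<and> t * deriv ratio t = ratio t"
proof -
  obtain N0 where N0: "negligible N0" "\<And>t. t \<in> {x<..<1} - N0 \<Longrightarrow> ratio differentiable (at t)"
    using ratio_differentiable_ae[of x] x a_le_one by auto
  define S where "S = {x<..<a} - N0"
  define k where "k = (\<lambda>t. - ((deriv ratio t)\<^sup>2 + deriv defect t))"
  have S: "0 < t" "t < 1" "ratio differentiable (at t)" "ratio t < 1" if "t \<in> S" for t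
    using that x a_le_one N0(2) ratio_below by (auto simp: S_def)
  have "((\<lambda>t. (deriv ratio t)\<^sup>2 + deriv defect t) has_integral defect x + (defect a - defect x)) {x..a}"
    using x a_le_one by (intro has_integral_add energy_has_integral_below has_integral_deriv_defect) auto
  then have "((\<lambda>t. (deriv ratio t)\<^sup>2 + deriv defect t) has_integral 0) {x..a}"
    using ratio_above[of a] a_le_one by (simp add: defect_def)
  then have "(k has_integral - 0) {x..a}"
    unfolding k_def by (rule has_integral_neg)
  then have "(k has_integral 0) S"
    using has_integral_spike_set_eq[OF negligible_spikes_Icc_Ioo_diff[OF N0(1), of x a k]]
    unfolding S_def by simp
  moreover have "0 \<le> k t" if "t \<in> S" for t
    using deriv_ratio_sq_plus_deriv_defect_nonpos(1)[OF S[OF that]] by (simp add: k_def)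
  ultimately have negligible: "negligible {t \<in> S. k t \<noteq> 0}"
    by (intro has_integral_0_nonneg_imp_negligible)
  have linear: "ratio differentiable (at t) \<and> t * deriv ratio t = ratio t"
    if "t \<in> S" "k t = 0" for t
    using that S[OF that(1)] deriv_ratio_sq_plus_deriv_defect_nonpos(2)[OF S[OF that(1)]]
    by (simp add: k_def)
  show ?thesis
  proof (rule that)
    show "negligible (N0 \<union> {t \<in> S. k t \<noteq> 0})"
      using N0(1) negligible by simp
    fix t assume "t \<in> {x<..<a} - (N0 \<union> {t \<in> S. k t \<noteq> 0})"
    then have "t \<in> S" "k t = 0"
      by (auto simp: S_def)
    then show "ratio differentiable (at t) \<and> t * deriv ratio t = ratio t"
      by (rule linear)
  qed
qed

lemma ratio_eq_below_threshold:
  assumes x: "0 < x" "x < a"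
  shows "ratio x = x / a"
proof -
  obtain N where N: "negligible N"
      "\<And>t. t \<in> {x<..<a} - N \<Longrightarrow> ratio differentiable (at t) \<and> t * deriv ratio t = ratio t"
    using ratio_linear_ae_below[OF x] by blast
  have deriv_zero: "deriv (\<lambda>t. ratio t / t) t = 0" if t: "t \<in> {x<..<a} - N" for t
    using DERIV_imp_deriv[OF has_derivative_ratio_div] N(2)[OF t] t x by simp
  have ftc: "(deriv (\<lambda>t. ratio t / t) has_integral ratio a / a - ratio x / x) {x..a}"
    using has_integral_deriv_ratio_div[of x a] x a_le_one by simp
  have "((\<lambda>_. 0) has_integral ratio a / a - ratio x / x) {x..a}"
  proof (rule has_integral_spike[OF _ _ ftc])
    show "negligible ({x, a} \<union> N)"
      using N(1) by simp
    fix t assume "t \<in> {x..a} - ({x, a} \<union> N)"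
    then show "0 = deriv (\<lambda>t. ratio t / t) t"
      using deriv_zero by simp
  qed
  then have "ratio x / x = 1 / a"
    using ratio_above[of a] a_le_one by (simp add: has_integral_0_eq)
  then show ?thesis
    using x by (simp add: field_simps)
qed

end

lemma fixed_point_imp_ua:
  assumes fixed: "\<forall>x\<in>{0..1}. star \<delta> \<delta> x = \<delta> x"
  shows "\<exists>a\<in>{0..1}. \<forall>x\<in>{0..1}. \<delta> x = ua a x"
proof -
  have energy_eq: "energy x = defect x" if "0 < x" "x \<le> 1" for x
    using fixed that star_self_fixed_iff[of x] by simp
  have delta_eq: "\<delta> x = x * ratio x" if "0 < x" for x
    using that by (simp add: ratio_def)
  show ?thesis
  proof (cases "\<forall>t. 0 < t \<longrightarrow> t \<le> 1 \<longrightarrow> ratio t = 1")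
    case True
    then have "\<forall>x\<in>{0..1}. \<delta> x = ua 0 x"
      using delta_zero delta_eq by (auto simp: ua_def)
    then show ?thesis
      by auto
  next
    case False
    then obtain t0 where t0: "0 < t0" "t0 \<le> 1" "ratio t0 \<noteq> 1"
      by blast
    obtain a where a: "t0 < a" "a \<le> 1" and above: "\<And>t. a \<le> t \<Longrightarrow> t \<le> 1 \<Longrightarrow> ratio t = 1"
      and below: "\<And>t. 0 < t \<Longrightarrow> t < a \<Longrightarrow> ratio t < 1"
      using ratio_threshold[OF t0] by blast
    have "\<delta> x = ua a x" if x: "x \<in> {0..1}" for x
    proof -
      have "x = 0 \<or> (0 < x \<and> x < a) \<or> a \<le> x"
        using x by auto
      then consider "x = 0" | "0 < x" "x < a" | "a \<le> x"
        by blast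
      then show ?thesis
      proof cases
        case 2
        then show ?thesis
          using ratio_eq_below_threshold[OF energy_eq a(2) above below] delta_eq
          by (simp add: ua_def power2_eq_square)
      qed (use a t0 x delta_zero delta_eq above in \<open>auto simp: ua_def power2_eq_square\<close>)
    qed
    then show ?thesis
      using a t0 by auto
  qed
qed

end

lemma deriv_ratio_ua:
  fixes \<delta> :: "real \<Rightarrow> real"
  assumes a: "0 \<le> a" "a \<le> 1" and \<delta>: "\<And>x. x \<in> {0..1} \<Longrightarrow> \<delta> x = ua a x"
    and u: "0 < u" "u < 1" "u \<noteq> a"
  shows "deriv (\<lambda>t. \<delta> t / t) u = (if u < a then 1 / a else 0)"
proof (cases "u < a")
  case True
  have "((\<lambda>t. t / a) has_real_derivative 1 / a) (at u)"
    using True u by (auto intro!: derivative_eq_intros)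
  then have "((\<lambda>t. \<delta> t / t) has_real_derivative 1 / a) (at u)"
    by (rule has_field_derivative_transform_within_open[of _ _ _ "{0<..<a}"])
       (use True u a \<delta> in \<open>auto simp: ua_def power2_eq_square\<close>)
  then show ?thesis
    using True by (simp add: DERIV_imp_deriv)
next
  case False
  have "((\<lambda>t. \<delta> t / t) has_real_derivative 0) (at u)"
    by (rule has_field_derivative_transform_within_open[of "\<lambda>_. 1" _ _ "{a<..<1}"])
       (use False u a \<delta> in \<open>auto simp: ua_def\<close>)
  then show ?thesis
    using False by (simp add: DERIV_imp_deriv)
qed

lemma star_self_ua:
  fixes \<delta> :: "real \<Rightarrow> real"
  assumes a: "0 \<le> a" "a \<le> 1" and \<delta>: "\<And>x. x \<in> {0..1} \<Longrightarrow> \<delta> x = ua a x"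
    and x: "x \<in> {0..1}"
  shows "star \<delta> \<delta> x = \<delta> x"
proof (cases "x = 0")
  case True
  then show ?thesis
    using \<delta>[of 0] by (simp add: star_def ua_def)
next
  case False
  with x have x: "0 < x" "x \<le> 1"
    by auto
  define H where "H = (\<lambda>u. deriv (\<lambda>t. \<delta> t / t) u * deriv (\<lambda>t. \<delta> t / t) u)"
  have H: "H u = (if u < a then 1 / a\<^sup>2 else 0)" if "0 < u" "u < 1" "u \<noteq> a" for u
    using deriv_ratio_ua[OF a \<delta> that] by (simp add: H_def power2_eq_square)
  have "(H has_integral (if x < a then (a - x) / a\<^sup>2 else 0)) {x..1}"
  proof (cases "x < a")
    case True
    have "(H has_integral (a - x) * (1 / a\<^sup>2)) {x..a}"
    proof (rule has_integral_spike_finite[where S="{a}" and f="\<lambda>_. 1 / a\<^sup>2"])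
      show "((\<lambda>_. 1 / a\<^sup>2) has_integral (a - x) * (1 / a\<^sup>2)) {x..a}"
        using has_integral_const_real[of "1 / a\<^sup>2" x a] True by simp
    qed (use H x True a in auto)
    moreover have "(H has_integral 0) {a..1}"
      by (rule has_integral_spike_finite[where S="{a, 1}" and f="\<lambda>_. 0"]) (use H x True a in auto)
    ultimately have "(H has_integral (a - x) * (1 / a\<^sup>2) + 0) {x..1}"
      by (rule has_integral_combine[rotated 2]) (use True a in auto)
    then show ?thesis
      using True by simp
  next
    case False
    have "(H has_integral 0) {x..1}"
      by (rule has_integral_spike_finite[where S="{x, 1}" and f="\<lambda>_. 0"]) (use H x False a in auto)
    then show ?thesis
      using False by simp
  qed
  then have "(LINT u:{x..1}|lebesgue. H u) = (if x < a then (a - x) / a\<^sup>2 else 0)"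
    by (rule set_integral_eq_if_has_integral_nonneg) (simp add: H_def)
  moreover have "star \<delta> \<delta> x = (1 / x) * \<delta> x * \<delta> x + x\<^sup>2 * (LINT u:{x..1}|lebesgue. H u)"
    using x by (simp add: star_def H_def)
  moreover have "\<delta> x = (if x < a then x\<^sup>2 / a else x)"
    using \<delta>[of x] x by (cases "x = a") (auto simp: ua_def power2_eq_square)
  moreover have "(1 / x) * (x\<^sup>2 / a) * (x\<^sup>2 / a) + x\<^sup>2 * ((a - x) / a\<^sup>2) = x\<^sup>2 / a" if "x < a"
    using x that by (simp add: field_simps power2_eq_square)
  ultimately show ?thesis
    using x by (cases "x < a") (simp_all add: power2_eq_square)
qed

theorem mainTheorem4:
  fixes \<delta> :: "real \<Rightarrow> real"
  assumes "copD_LSL \<delta>"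
  shows "(\<forall>x\<in>{0..1}. star \<delta> \<delta> x = \<delta> x) \<longleftrightarrow>
         (\<exists>a\<in>{0..1}. \<forall>x\<in>{0..1}. \<delta> x = ua a x)"
proof
  assume "\<forall>x\<in>{0..1}. star \<delta> \<delta> x = \<delta> x"
  then show "\<exists>a\<in>{0..1}. \<forall>x\<in>{0..1}. \<delta> x = ua a x"
    using lsl_delta.fixed_point_imp_ua[OF lsl_delta.intro[OF assms]] by blast
next
  assume "\<exists>a\<in>{0..1}. \<forall>x\<in>{0..1}. \<delta> x = ua a x"
  then show "\<forall>x\<in>{0..1}. star \<delta> \<delta> x = \<delta> x"
    using star_self_ua by auto
qed

end
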